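(* Let $\Theta$ be an action theory, $\Phi$ a law, and $\Theta'\in\Theta\ominus\Phi$. Then $\Theta\models_{PDL}\Theta'$.
   Context: Fix a finite set $\mathrm{Act}$ of atomic actions and a finite set $\mathrm{Prop}$ of atoms; $\mathrm{Lit}$ is the set of literals. Boolean formulas are classical propositional formulas over $\mathrm{Prop}$, $\models_{CPL}$ classical consequence. Modal formulas are built from Boolean formulas with the Boolean connectives and $[a]$ ($a\in\mathrm{Act}$); $\langle a\rangle\Phi:=\neg[a]\neg\Phi$. A PDL-model is $\langle W,R\rangle$, $W$ a set of valuations (maximal consistent sets of literals), $R_a\subseteq W\times W$ for each $a$; truth is standard ($w\models p$ iff $p\in w$, $w\models[a]\Phi$ iff all $R_a$-successors satisfy $\Phi$); a model satisfies a formula iff it holds at all worlds; $\Sigma\models_{PDL}\Phi$ iff every model of $\Sigma$ is a model of $\Phi$ ($\Theta\models_{PDL}\Theta'$ means $\Theta\models_{PDL}\Phi$ for all $\Phi\in\Theta'$). A static law is a Boolean formula; an effect law for $a$ is $\varphi\to[a]\psi$; an executability law for $a$ is $\varphi\to\langle a\rangle\top$ ($\varphi,\psi$ Boolean); a law is any of these. An action theory is a finite set $\Theta=S\cup E\cup X$ of static, effect and executability laws; $E_a,X_a$ are those about $a$. Syntactic contraction $\Theta\ominus\Phi$ (a set of action theories). Notation: $\bigwedge S$ is the conjunction of $S$; $IP(\chi)$ is the set of prime implicants of the Boolean formula $\chi$ (weakest conjunctions of literals implying $\chi$); for a term $\tau$, $\mathrm{atm}(\tau)$ is the set of atoms occurring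 in it, and for $A\subseteq\mathrm{Prop}\setminus\mathrm{atm}(\tau)$, $\varphi_A:=\bigwedge_{p\in A}p\wedge\bigwedge_{p\in\mathrm{Prop}\setminus(\mathrm{atm}(\tau)\cup A)}\neg p$. (1) Executability law $\varphi\to\langle a\rangle\top$: if $\Theta\not\models_{PDL}\varphi\to\langle a\rangle\top$ the result is $\{\Theta\}$; otherwise it consists of the theories $(\Theta\setminus X_a)\cup\{(\varphi_i\wedge\neg(\tau\wedge\varphi_A))\to\langle a\rangle\top:\varphi_i\to\langle a\rangle\top\in X_a\}$ for all $\tau\in IP(\bigwedge S\wedge\varphi)$ and $A\subseteq\mathrm{Prop}\setminus\mathrm{atm}(\tau)$ with $S\not\models_{CPL}\neg(\tau\wedge\varphi_A)$. (2) Effect law $\varphi\to[a]\psi$: if $\Theta\not\models_{PDL}\varphi\to[a]\psi$ the result is $\{\Theta\}$; otherwise let $E^-_a$ be the union of all minimal subsets $E'\subseteq E_a$ with $S\cup E'\models_{PDL}\varphi\to[a]\psi$. For every $\tau\in IP(\bigwedge S\wedge\varphi)$, $A\subseteq\mathrm{Prop}\setminus\mathrm{atm}(\tau)$ with $S\not\models_{CPL}\neg(\tau\wedge\varphi_A)$, and $\tau'\in IP(\bigwedge S\wedge\neg\psi)$, the result contains $\Theta'=(\Theta\setminus E^-_a)\cup\{(\varphi_i\wedge\neg(\tau\wedge\varphi_A))\to[a]\psi_i:\varphi_i\to[a]\psi_i\in E^-_a\}\cup\{(\varphi_i\wedge\tau\wedge\varphi_A)\to[a](\psi_i\vee\tau'):\varphi_i\to[a]\psi_i\in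 E^-_a\}\cup\{(\tau\wedge\varphi_A\wedge\ell)\to[a](\psi\vee\ell):\ell\in L$ for some $L\subseteq\mathrm{Lit}$ with $S\models_{CPL}(\tau\wedge\varphi_A)\to\bigwedge L$ and $S\not\models_{CPL}\neg(\tau'\wedge\bigwedge L)$, and ($\Theta\not\models_{PDL}(\tau\wedge\varphi_A\wedge\ell)\to[a]\neg\ell$ or $\ell$ is a literal of $\tau'$)$\}$. (3) Static law $\varphi$: if $S\not\models_{CPL}\varphi$ the result is $\{\Theta\}$; otherwise, for every $S^-\in S\ominus\varphi$ (a given classical contraction operator on sets of Boolean formulas, assumed to behave like a Katsuno–Mendelzon contraction, in particular $S\models_{CPL}\bigwedge S^-$, and to be sound, complete and minimal w.r.t. its semantics), the result contains the theory obtained from $(\Theta\setminus S)\cup S^-$ by replacing, for each action $a$, the laws of $X_a$ by $\{(\varphi_i\wedge\varphi)\to\langle a\rangle\top:\varphi_i\to\langle a\rangle\top\in X_a\}$ and adding $\neg\varphi\to[a]\bot$. *)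

theory Defs
  imports Main
begin

text \<open>Boolean formulas over the atoms 'p (Prop = UNIV :: 'p set, finite).\<close>
datatype 'p bform =
    Atom 'p | BTop | BBot | BNeg "'p bform" | BAnd "'p bform" "'p bform"
  | BOr "'p bform" "'p bform" | BImp "'p bform" "'p bform"

datatype ('p, 'a) mform =
    MBool "'p bform" | MNeg "('p, 'a) mform" | MAnd "('p, 'a) mform" "('p, 'a) mform"
  | MOr "('p, 'a) mform" "('p, 'a) mform" | MImp "('p, 'a) mform" "('p, 'a) mform"
  | Box 'a "('p, 'a) mform"

definition Dia :: "'a \<Rightarrow> ('p, 'a) mform \<Rightarrow> ('p, 'a) mform" where
  "Dia a \<Phi> = MNeg (Box a (MNeg \<Phi>))"

type_synonym 'p lit = "'p \<times> bool"

fun lit_form :: "'p lit \<Rightarrow> 'p bform" where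
  "lit_form (p, True) = Atom p"
| "lit_form (p, False) = BNeg (Atom p)"

definition big_and :: "'p bform set \<Rightarrow> 'p bform" where
  "big_and S = foldr BAnd (SOME xs. set xs = S) BTop"

definition tconj :: "'p lit set \<Rightarrow> 'p bform" where
  "tconj T = big_and (lit_form ` T)"

definition atm :: "'p lit set \<Rightarrow> 'p set" where
  "atm T = fst ` T"

definition consistent_term :: "'p lit set \<Rightarrow> bool" where
  "consistent_term T \<longleftrightarrow> (\<forall>p. \<not> ((p, True) \<in> T \<and> (p, False) \<in> T))"

text \<open>A valuation (maximal consistent set of literals) is represented by the set of true atoms.\<close>
fun beval :: "'p set \<Rightarrow> 'p bform \<Rightarrow> bool" where
  "beval v (Atom p) = (p \<in> v)"
| "beval v BTop = True"
| "beval v BBot = False"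
| "beval v (BNeg f) = (\<not> beval v f)"
| "beval v (BAnd f g) = (beval v f \<and> beval v g)"
| "beval v (BOr f g) = (beval v f \<or> beval v g)"
| "beval v (BImp f g) = (beval v f \<longrightarrow> beval v g)"

definition cpl_ent :: "'p bform set \<Rightarrow> 'p bform \<Rightarrow> bool" where
  "cpl_ent S f \<longleftrightarrow> (\<forall>v. (\<forall>g\<in>S. beval v g) \<longrightarrow> beval v f)"

definition IP :: "'p bform \<Rightarrow> 'p lit set set" where
  "IP chi = {T. consistent_term T \<and> cpl_ent {} (BImp (tconj T) chi)
              \<and> (\<forall>T'. T' \<subset> T \<longrightarrow> \<not> cpl_ent {} (BImp (tconj T') chi))}"

definition phiA :: "'p lit set \<Rightarrow> 'p set \<Rightarrow> 'p bform" where
  "phiA \<tau> A = tconj ({(p, True) | p. p \<in> A} \<union> {(p, False) | p. p \<notin> atm \<tau> \<union> A})"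

definition pdl_model :: "'p set set \<Rightarrow> ('a \<Rightarrow> ('p set \<times> 'p set) set) \<Rightarrow> bool" where
  "pdl_model W R \<longleftrightarrow> (\<forall>a. R a \<subseteq> W \<times> W)"

fun meval :: "('a \<Rightarrow> ('p set \<times> 'p set) set) \<Rightarrow> 'p set \<Rightarrow> ('p, 'a) mform \<Rightarrow> bool" where
  "meval R w (MBool f) = beval w f"
| "meval R w (MNeg F) = (\<not> meval R w F)"
| "meval R w (MAnd F G) = (meval R w F \<and> meval R w G)"
| "meval R w (MOr F G) = (meval R w F \<or> meval R w G)"
| "meval R w (MImp F G) = (meval R w F \<longrightarrow> meval R w G)"
| "meval R w (Box a F) = (\<forall>w'. (w, w') \<in> R a \<longrightarrow> meval R w' F)"

definition model_sat :: "'p set set \<Rightarrow> ('a \<Rightarrow> ('p set \<times> 'p set) set) \<Rightarrow> ('p, 'a) mform \<Rightarrow> bool" where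
  "model_sat W R F \<longleftrightarrow> (\<forall>w\<in>W. meval R w F)"

definition pdl_ent :: "('p, 'a) mform set \<Rightarrow> ('p, 'a) mform \<Rightarrow> bool" where
  "pdl_ent \<Sigma> F \<longleftrightarrow> (\<forall>W R. pdl_model W R \<longrightarrow> (\<forall>G\<in>\<Sigma>. model_sat W R G) \<longrightarrow> model_sat W R F)"

datatype ('p, 'a) law =
    Static "'p bform"
  | Effect "'p bform" 'a "'p bform"
  | Exec "'p bform" 'a

fun law_form :: "('p, 'a) law \<Rightarrow> ('p, 'a) mform" where
  "law_form (Static f) = MBool f"
| "law_form (Effect f a g) = MImp (MBool f) (Box a (MBool g))"
| "law_form (Exec f a) = MImp (MBool f) (Dia a (MBool BTop))"

definition law_ent :: "('p, 'a) law set \<Rightarrow> ('p, 'a) law \<Rightarrow> bool" where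
  "law_ent \<Theta> L \<longleftrightarrow> pdl_ent (law_form ` \<Theta>) (law_form L)"

definition theory_ent :: "('p, 'a) law set \<Rightarrow> ('p, 'a) law set \<Rightarrow> bool" where
  "theory_ent \<Theta> \<Theta>' \<longleftrightarrow> (\<forall>L\<in>\<Theta>'. law_ent \<Theta> L)"

definition statics :: "('p, 'a) law set \<Rightarrow> 'p bform set" where
  "statics \<Theta> = {f. Static f \<in> \<Theta>}"

definition static_laws :: "('p, 'a) law set \<Rightarrow> ('p, 'a) law set" where
  "static_laws \<Theta> = {L \<in> \<Theta>. \<exists>f. L = Static f}"

definition effects_of :: "('p, 'a) law set \<Rightarrow> 'a \<Rightarrow> ('p, 'a) law set" where
  "effects_of \<Theta> a = {L \<in> \<Theta>. \<exists>f g. L = Effect f a g}"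

definition execs_of :: "('p, 'a) law set \<Rightarrow> 'a \<Rightarrow> ('p, 'a) law set" where
  "execs_of \<Theta> a = {L \<in> \<Theta>. \<exists>f. L = Exec f a}"

definition all_execs :: "('p, 'a) law set \<Rightarrow> ('p, 'a) law set" where
  "all_execs \<Theta> = {L \<in> \<Theta>. \<exists>f a. L = Exec f a}"

definition tauA :: "'p lit set \<Rightarrow> 'p set \<Rightarrow> 'p bform" where
  "tauA \<tau> A = BAnd (tconj \<tau>) (phiA \<tau> A)"

definition admissible :: "('p, 'a) law set \<Rightarrow> 'p bform \<Rightarrow> 'p lit set \<Rightarrow> 'p set \<Rightarrow> bool" where
  "admissible \<Theta> \<phi> \<tau> A \<longleftrightarrow>
     \<tau> \<in> IP (BAnd (big_and (statics \<Theta>)) \<phi>) \<and> A \<subseteq> UNIV - atm \<tau>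
     \<and> \<not> cpl_ent (statics \<Theta>) (BNeg (tauA \<tau> A))"

definition contract_exec :: "('p, 'a) law set \<Rightarrow> 'p bform \<Rightarrow> 'a \<Rightarrow> ('p, 'a) law set set" where
  "contract_exec \<Theta> \<phi> a =
    (if \<not> law_ent \<Theta> (Exec \<phi> a) then {\<Theta>}
     else {(\<Theta> - execs_of \<Theta> a)
             \<union> {Exec (BAnd \<phi>i (BNeg (tauA \<tau> A))) a | \<phi>i. Exec \<phi>i a \<in> \<Theta>}
          | \<tau> A. admissible \<Theta> \<phi> \<tau> A})"

definition Eminus :: "('p, 'a) law set \<Rightarrow> 'p bform \<Rightarrow> 'a \<Rightarrow> 'p bform \<Rightarrow> ('p, 'a) law set" where
  "Eminus \<Theta> \<phi> a \<psi> = \<Union> {E'. E' \<subseteq> effects_of \<Theta> a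
        \<and> law_ent (static_laws \<Theta> \<union> E') (Effect \<phi> a \<psi>)
        \<and> (\<forall>E''. E'' \<subset> E' \<longrightarrow> \<not> law_ent (static_laws \<Theta> \<union> E'') (Effect \<phi> a \<psi>))}"

definition contract_effect :: "('p, 'a) law set \<Rightarrow> 'p bform \<Rightarrow> 'a \<Rightarrow> 'p bform \<Rightarrow> ('p, 'a) law set set" where
  "contract_effect \<Theta> \<phi> a \<psi> =
    (if \<not> law_ent \<Theta> (Effect \<phi> a \<psi>) then {\<Theta>}
     else {(\<Theta> - Eminus \<Theta> \<phi> a \<psi>)
            \<union> {Effect (BAnd \<phi>i (BNeg (tauA \<tau> A))) a \<psi>i | \<phi>i \<psi>i. Effect \<phi>i a \<psi>i \<in> Eminus \<Theta> \<phi> a \<psi>}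
            \<union> {Effect (BAnd \<phi>i (tauA \<tau> A)) a (BOr \<psi>i (tconj \<tau>')) | \<phi>i \<psi>i.
                  Effect \<phi>i a \<psi>i \<in> Eminus \<Theta> \<phi> a \<psi>}
            \<union> {Effect (BAnd (tauA \<tau> A) (lit_form l)) a (BOr \<psi> (lit_form l)) | l.
                  (\<exists>L. l \<in> L \<and> cpl_ent (statics \<Theta>) (BImp (tauA \<tau> A) (tconj L))
                        \<and> \<not> cpl_ent (statics \<Theta>) (BNeg (BAnd (tconj \<tau>') (tconj L))))
                  \<and> (\<not> law_ent \<Theta> (Effect (BAnd (tauA \<tau> A) (lit_form l)) a (BNeg (lit_form l)))
                     \<or> l \<in> \<tau>')}
          | \<tau> A \<tau>'. admissible \<Theta> \<phi> \<tau> A \<and> \<tau>' \<in> IP (BAnd (big_and (statics \<Theta>)) (BNeg \<psi>))})"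

definition contract_static :: "('p bform set \<Rightarrow> 'p bform \<Rightarrow> 'p bform set set)
    \<Rightarrow> ('p, 'a) law set \<Rightarrow> 'p bform \<Rightarrow> ('p, 'a) law set set" where
  "contract_static cc \<Theta> \<phi> =
    (if \<not> cpl_ent (statics \<Theta>) \<phi> then {\<Theta>}
     else {(\<Theta> - static_laws \<Theta> - all_execs \<Theta>) \<union> Static ` Sm
            \<union> {Exec (BAnd \<phi>i \<phi>) a | \<phi>i a. Exec \<phi>i a \<in> \<Theta>}
            \<union> {Effect (BNeg \<phi>) a BBot | a. True}
          | Sm. Sm \<in> cc (statics \<Theta>) \<phi>})"

definition contract :: "('p bform set \<Rightarrow> 'p bform \<Rightarrow> 'p bform set set)
    \<Rightarrow> ('p, 'a) law set \<Rightarrow> ('p, 'a) law \<Rightarrow> ('p, 'a) law set set" where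
  "contract cc \<Theta> \<Phi> = (case \<Phi> of
      Static \<phi> \<Rightarrow> contract_static cc \<Theta> \<phi>
    | Effect \<phi> a \<psi> \<Rightarrow> contract_effect \<Theta> \<phi> a \<psi>
    | Exec \<phi> a \<Rightarrow> contract_exec \<Theta> \<phi> a)"

text \<open>Assumption on the classical contraction operator used: each result S^- is a finite
  set of Boolean formulas with S \<Turnstile> \<And>S^- (KM inclusion postulate).\<close>
definition classical_contraction :: "('p bform set \<Rightarrow> 'p bform \<Rightarrow> 'p bform set set) \<Rightarrow> bool" where
  "classical_contraction cc \<longleftrightarrow>
     (\<forall>S \<phi> Sm. finite S \<longrightarrow> Sm \<in> cc S \<phi> \<longrightarrow> finite Sm \<and> cpl_ent S (big_and Sm))"

end

theory Submission
  imports Defs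
begin

text \<open>Every law added by a contraction is either a law of the theory, a law obtained from one
  by strengthening its antecedent or weakening its consequent, or a consequence of the static
  laws: of the classical contraction of S (included in S's consequences), or of the contracted
  static law itself, which makes executions from a \<not>\<phi>-state vacuously impossible.\<close>

lemma law_ent_iff:
  "law_ent \<Theta> L \<longleftrightarrow> (\<forall>W R. pdl_model W R \<longrightarrow> (\<forall>G\<in>\<Theta>. \<forall>w\<in>W. meval R w (law_form G))
      \<longrightarrow> (\<forall>w\<in>W. meval R w (law_form L)))"
  unfolding law_ent_def pdl_ent_def model_sat_def by auto

lemma law_ent_member: "L \<in> \<Theta> \<Longrightarrow> law_ent \<Theta> L"
  unfolding law_ent_iff by blast

lemma law_ent_Exec_mono:
  assumes "law_ent \<Theta> (Exec \<phi> a)" and "\<forall>v. beval v \<phi>' \<longrightarrow> beval v \<phi>"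
  shows "law_ent \<Theta> (Exec \<phi>' a)"
  using assms unfolding law_ent_iff by (fastforce simp: Dia_def)

lemma law_ent_Effect_mono:
  assumes "law_ent \<Theta> (Effect \<phi> a \<psi>)"
    and "\<forall>v. beval v \<phi>' \<longrightarrow> beval v \<phi>" and "\<forall>v. beval v \<psi> \<longrightarrow> beval v \<psi>'"
  shows "law_ent \<Theta> (Effect \<phi>' a \<psi>')"
  using assms unfolding law_ent_iff by fastforce

lemma law_ent_Static:
  assumes "cpl_ent (statics \<Theta>) \<phi>"
  shows "law_ent \<Theta> (Static \<phi>)"
  using assms unfolding law_ent_iff cpl_ent_def statics_def by fastforce

lemma law_ent_Effect_neg_static:
  assumes "cpl_ent (statics \<Theta>) \<phi>"
  shows "law_ent \<Theta> (Effect (BNeg \<phi>) a \<psi>)"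
  using assms unfolding law_ent_iff cpl_ent_def statics_def by fastforce

lemma beval_big_and:
  assumes "finite S"
  shows "beval v (big_and S) \<longleftrightarrow> (\<forall>g\<in>S. beval v g)"
proof -
  have "set (SOME xs. set xs = S) = S"
    using finite_list[OF assms] by (rule someI_ex)
  moreover have "beval v (foldr BAnd xs BTop) \<longleftrightarrow> (\<forall>g\<in>set xs. beval v g)" for xs
    by (induction xs) auto
  ultimately show ?thesis unfolding big_and_def by auto
qed

lemma cpl_ent_big_and_member:
  assumes "finite S'" and "cpl_ent S (big_and S')" and "\<phi> \<in> S'"
  shows "cpl_ent S \<phi>"
  using assms unfolding cpl_ent_def by (auto simp: beval_big_and)

lemma finite_statics: "finite \<Theta> \<Longrightarrow> finite (statics \<Theta>)"
proof -
  assume "finite \<Theta>"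
  moreover have "statics \<Theta> \<subseteq> (\<lambda>L. case L of Static f \<Rightarrow> f | _ \<Rightarrow> BTop) ` \<Theta>"
    unfolding statics_def by force
  ultimately show ?thesis using finite_surj by blast
qed

lemma Eminus_subset: "Eminus \<Theta> \<phi> a \<psi> \<subseteq> \<Theta>"
  unfolding Eminus_def effects_of_def by blast

lemma admissible_tauA_imp:
  assumes "admissible \<Theta> \<phi> \<tau> A"
  shows "\<forall>v. beval v (tauA \<tau> A) \<longrightarrow> beval v \<phi>"
  using assms unfolding admissible_def IP_def cpl_ent_def tauA_def by auto

lemma contract_exec_sound:
  assumes "\<Theta>' \<in> contract_exec \<Theta> \<phi> a"
  shows "theory_ent \<Theta> \<Theta>'"
proof (cases "law_ent \<Theta> (Exec \<phi> a)")
  case False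
  with assms show ?thesis
    by (auto simp: contract_exec_def theory_ent_def intro: law_ent_member)
next
  case True
  then obtain \<tau> A where \<Theta>': "\<Theta>' = (\<Theta> - execs_of \<Theta> a)
      \<union> {Exec (BAnd \<phi>i (BNeg (tauA \<tau> A))) a | \<phi>i. Exec \<phi>i a \<in> \<Theta>}"
    using assms by (auto simp: contract_exec_def)
  show ?thesis unfolding theory_ent_def \<Theta>'
    by (auto intro: law_ent_member law_ent_Exec_mono)
qed

lemma contract_effect_sound:
  assumes "\<Theta>' \<in> contract_effect \<Theta> \<phi> a \<psi>"
  shows "theory_ent \<Theta> \<Theta>'"
proof (cases "law_ent \<Theta> (Effect \<phi> a \<psi>)")
  case False
  with assms show ?thesis
    by (auto simp: contract_effect_def theory_ent_def intro: law_ent_member)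
next
  case True
  let ?Em = "Eminus \<Theta> \<phi> a \<psi>"
  obtain \<tau> A \<tau>' where adm: "admissible \<Theta> \<phi> \<tau> A" and \<Theta>': "\<Theta>' = (\<Theta> - ?Em)
      \<union> {Effect (BAnd \<phi>i (BNeg (tauA \<tau> A))) a \<psi>i | \<phi>i \<psi>i. Effect \<phi>i a \<psi>i \<in> ?Em}
      \<union> {Effect (BAnd \<phi>i (tauA \<tau> A)) a (BOr \<psi>i (tconj \<tau>')) | \<phi>i \<psi>i. Effect \<phi>i a \<psi>i \<in> ?Em}
      \<union> {Effect (BAnd (tauA \<tau> A) (lit_form l)) a (BOr \<psi> (lit_form l)) | l.
            (\<exists>L. l \<in> L \<and> cpl_ent (statics \<Theta>) (BImp (tauA \<tau> A) (tconj L))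
                  \<and> \<not> cpl_ent (statics \<Theta>) (BNeg (BAnd (tconj \<tau>') (tconj L))))
            \<and> (\<not> law_ent \<Theta> (Effect (BAnd (tauA \<tau> A) (lit_form l)) a (BNeg (lit_form l)))
               \<or> l \<in> \<tau>')}"
    using assms True by (auto simp: contract_effect_def)
  have weakened: "law_ent \<Theta> (Effect (BAnd \<phi>i X) a (BOr \<psi>i Y))"
    if "Effect \<phi>i a \<psi>i \<in> \<Theta>" for \<phi>i \<psi>i X Y
    using law_ent_Effect_mono[OF law_ent_member[OF that]] by simp
  have new_effects: "law_ent \<Theta> (Effect (BAnd (tauA \<tau> A) X) a (BOr \<psi> Y))" for X Y
    using law_ent_Effect_mono[OF True] admissible_tauA_imp[OF adm] by simp
  have strengthened: "law_ent \<Theta> (Effect (BAnd \<phi>i X) a \<psi>i)"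
    if "Effect \<phi>i a \<psi>i \<in> \<Theta>" for \<phi>i \<psi>i X
    using law_ent_Effect_mono[OF law_ent_member[OF that]] by simp
  show ?thesis unfolding theory_ent_def \<Theta>'
    using Eminus_subset[of \<Theta> \<phi> a \<psi>]
    by (auto intro: law_ent_member strengthened weakened new_effects)
qed

lemma contract_static_sound:
  assumes "classical_contraction cc" and "finite \<Theta>" and "\<Theta>' \<in> contract_static cc \<Theta> \<phi>"
  shows "theory_ent \<Theta> \<Theta>'"
proof (cases "cpl_ent (statics \<Theta>) \<phi>")
  case False
  with assms(3) show ?thesis
    by (auto simp: contract_static_def theory_ent_def intro: law_ent_member)
next
  case True
  then obtain Sm where Sm: "Sm \<in> cc (statics \<Theta>) \<phi>" and \<Theta>': "\<Theta>' =
      (\<Theta> - static_laws \<Theta> - all_execs \<Theta>) \<union> Static ` Sm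
      \<union> {Exec (BAnd \<phi>i \<phi>) a | \<phi>i a. Exec \<phi>i a \<in> \<Theta>}
      \<union> {Effect (BNeg \<phi>) a BBot | a. True}"
    using assms(3) by (auto simp: contract_static_def)
  with assms(1,2) finite_statics
  have "finite Sm" and "cpl_ent (statics \<Theta>) (big_and Sm)"
    unfolding classical_contraction_def by blast+
  then have "law_ent \<Theta> (Static f)" if "f \<in> Sm" for f
    using that by (blast intro: law_ent_Static cpl_ent_big_and_member)
  then show ?thesis unfolding theory_ent_def \<Theta>'
    by (auto intro: law_ent_member law_ent_Exec_mono law_ent_Effect_neg_static[OF True])
qed

theorem lemma1:
  fixes cc :: "'p::finite bform set \<Rightarrow> 'p bform \<Rightarrow> 'p bform set set"
    and \<Theta> \<Theta>' :: "('p, 'a::finite) law set"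
    and \<Phi> :: "('p, 'a) law"
  assumes "classical_contraction cc"
    and "finite \<Theta>"
    and "\<Theta>' \<in> contract cc \<Theta> \<Phi>"
  shows "theory_ent \<Theta> \<Theta>'"
  using assms
  by (cases \<Phi>) (auto simp: contract_def
      intro: contract_static_sound contract_effect_sound contract_exec_sound)

end
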